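(* Let $\gamma$ be a cocycle and set $V_{\mathbb{R}}^\gamma:=\{z\in V_{\mathbb{R}}:\lambda(z)\ge\mathrm{val}_L(\gamma^{dom}(\lambda))\text{ for all }\lambda\in\Lambda\}$ and, for $w\in W$, $z_w:=-val(\gamma(w^{-1},\cdot))\in V_{\mathbb{R}}$. Then $V_{\mathbb{R}}^\gamma$ is the convex hull in $V_{\mathbb{R}}$ of the finitely many points $-z_w$, $w\in W$.
   Context: $L$ is a finite extension of $\mathbb{Q}_p$, $K$ a complete extension field of $\mathbb{Q}_p$ containing $L$; $|\ |_L$ normalized absolute value of $L$, $\mathrm{val}_L:K^\times\to\mathbb{R}$ with $\mathrm{val}_L(L^\times)=\mathbb{Z}$. $G$ is the $L$-points of an $L$-split connected reductive group, $T$ a maximal $L$-split torus, $P$ a Borel subgroup containing $T$, $W=N(T)/T$, $U_0$ a maximal compact subgroup special with respect to $T$, $\Lambda=T/(U_0\cap T)$, $\lambda:T\to\Lambda$ the projection, $W$ acting on $\Lambda$ by conjugation. $T^{--}=\{t:|\alpha(t)|_L\ge1$ for all roots $\alpha$ positive for $P\}$, $\Lambda^{--}=\lambda(T^{--})$. $V_{\mathbb{R}}=\mathrm{Hom}(\Lambda,\mathbb{R})$; each $\lambda\in\Lambda$ is viewed as a linear form on $V_{\mathbb{R}}$; $val:\mathrm{Hom}(\Lambda,K^\times)\to V_{\mathbb{R}}$, $\zeta\mapsto\mathrm{val}_L\circ\zeta$. A cocycle is $\gamma:W\times\Lambda\to K^\times$ with (a) $\gamma(w,\lambda\mu)=\gamma(w,\lambda)\gamma(w,\mu)$;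 (b) $\gamma(vw,\lambda)=\gamma(v,{}^w\lambda)\gamma(w,\lambda)$; (c) $|\gamma(w,\lambda)|\le1$ for $\lambda\in\Lambda^{--}$; (d) $\gamma(w,\lambda)=1$ if ${}^w\lambda=\lambda$. $\gamma^{dom}(\lambda):=\gamma(w,\lambda)$ for any $w$ with ${}^w\lambda\in\Lambda^{--}$. *)

theory Defs
  imports "HOL-Analysis.Analysis"
begin

text \<open>Cocharacter lattice Lambda = int^'n (T split of rank CARD('n)); the character
lattice X^*(T) is also modelled by int^'n, with the perfect pairing below.\<close>

definition pair :: "int^'n \<Rightarrow> int^'n \<Rightarrow> int" where
  "pair x l = (\<Sum>i\<in>UNIV. x$i * l$i)"

definition refl_X :: "int^'n \<Rightarrow> int^'n \<Rightarrow> int^'n \<Rightarrow> int^'n" where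
  "refl_X a acor x = (\<chi> i. x$i - pair x acor * a$i)"

definition refl_L :: "int^'n \<Rightarrow> int^'n \<Rightarrow> int^'n \<Rightarrow> int^'n" where
  "refl_L a acor l = (\<chi> i. l$i - pair a l * acor$i)"

definition root_datum :: "(int^'n) set \<Rightarrow> (int^'n \<Rightarrow> int^'n) \<Rightarrow> bool" where
  "root_datum R cor \<longleftrightarrow> finite R \<and> inj_on cor R \<and>
     (\<forall>a\<in>R. pair a (cor a) = 2
        \<and> refl_X a (cor a) ` R = R
        \<and> refl_L a (cor a) ` (cor ` R) = cor ` R
        \<and> (\<forall>c::int. c *s a \<in> R \<longrightarrow> c = 1 \<or> c = -1))"

inductive_set weyl :: "(int^'n) set \<Rightarrow> (int^'n \<Rightarrow> int^'n) \<Rightarrow> (int^'n \<Rightarrow> int^'n) set"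
  for R cor where
  weyl_id: "id \<in> weyl R cor"
| weyl_step: "w \<in> weyl R cor \<Longrightarrow> a \<in> R \<Longrightarrow> refl_L a (cor a) \<circ> w \<in> weyl R cor"

text \<open>Positive roots of the Borel P: those positive on a regular cocharacter rho;
Lambda^{--} = {l. <alpha,l> <= 0 for all positive alpha}.\<close>
definition antidom :: "(int^'n) set \<Rightarrow> int^'n \<Rightarrow> (int^'n) set" where
  "antidom R rho = {l. \<forall>a\<in>R. pair a rho > 0 \<longrightarrow> pair a l \<le> 0}"

definition valuation :: "('k::field \<Rightarrow> real) \<Rightarrow> bool" where
  "valuation v \<longleftrightarrow> (\<forall>x y. x \<noteq> 0 \<longrightarrow> y \<noteq> 0 \<longrightarrow> v (x*y) = v x + v y) \<and>
     (\<forall>x y. x \<noteq> 0 \<longrightarrow> y \<noteq> 0 \<longrightarrow> x + y \<noteq> 0 \<longrightarrow> v (x+y) \<ge> min (v x) (v y))"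

definition absv :: "real \<Rightarrow> ('k::field \<Rightarrow> real) \<Rightarrow> 'k \<Rightarrow> real" where
  "absv q v x = (if x = 0 then 0 else q powr (- v x))"

definition cocycle :: "(int^'n \<Rightarrow> int^'n) set \<Rightarrow> (int^'n) set \<Rightarrow> real \<Rightarrow> ('k::field \<Rightarrow> real)
     \<Rightarrow> ((int^'n \<Rightarrow> int^'n) \<Rightarrow> int^'n \<Rightarrow> 'k) \<Rightarrow> bool" where
  "cocycle W Lm q v g \<longleftrightarrow>
     (\<forall>w\<in>W. \<forall>l. g w l \<noteq> 0) \<and>
     (\<forall>w\<in>W. \<forall>l m. g w (l + m) = g w l * g w m) \<and>
     (\<forall>u\<in>W. \<forall>w\<in>W. \<forall>l. g (u \<circ> w) l = g u (w l) * g w l) \<and>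
     (\<forall>w\<in>W. \<forall>l\<in>Lm. absv q v (g w l) \<le> 1) \<and>
     (\<forall>w\<in>W. \<forall>l. w l = l \<longrightarrow> g w l = 1)"

definition gamma_dom :: "(int^'n \<Rightarrow> int^'n) set \<Rightarrow> (int^'n) set
     \<Rightarrow> ((int^'n \<Rightarrow> int^'n) \<Rightarrow> int^'n \<Rightarrow> 'k) \<Rightarrow> int^'n \<Rightarrow> 'k" where
  "gamma_dom W Lm g l = g (SOME w. w \<in> W \<and> w l \<in> Lm) l"

text \<open>V_R = Hom(Lambda, R) identified with real^'n via z \<mapsto> (z(e_i))_i;
a lattice element l acts as the linear form ev l.\<close>
definition ev :: "int^'n \<Rightarrow> real^'n \<Rightarrow> real" where
  "ev l z = (\<Sum>i\<in>UNIV. real_of_int (l$i) * z$i)"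

definition valvec :: "('k \<Rightarrow> real) \<Rightarrow> (int^'n \<Rightarrow> 'k) \<Rightarrow> real^'n" where
  "valvec v zeta = (\<chi> i. v (zeta (axis i 1)))"

definition V_gamma :: "(int^'n \<Rightarrow> int^'n) set \<Rightarrow> (int^'n) set \<Rightarrow> ('k \<Rightarrow> real)
     \<Rightarrow> ((int^'n \<Rightarrow> int^'n) \<Rightarrow> int^'n \<Rightarrow> 'k) \<Rightarrow> (real^'n) set" where
  "V_gamma W Lm v g = {z. \<forall>l. ev l z \<ge> v (gamma_dom W Lm g l)}"

definition z_pt :: "('k \<Rightarrow> real) \<Rightarrow> ((int^'n \<Rightarrow> int^'n) \<Rightarrow> int^'n \<Rightarrow> 'k)
     \<Rightarrow> (int^'n \<Rightarrow> int^'n) \<Rightarrow> real^'n" where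
  "z_pt v g w = - valvec v (g (inv w))"

end

theory Submission
  imports Defs
begin

(*
  For every l, gamma_dom l is g u l for some u in W with u l antidominant, and the cocycle
  identities together with |g w l| <= 1 on antidominant l show that val (g u l) is the minimum
  of val (g w l) = ev l (valvec val (g w)) over w in W.  Hence V_gamma is the set of points z at
  which every integral linear form l is at least its minimum over the finite set of points
  valvec val (g w) = - z_pt val g (inv w).  This set contains their convex hull; conversely a
  point outside the hull is separated from it by a real linear form, which after scaling by a
  large integer and rounding down is an integral form that still separates.

  W is finite because w is determined by its action on the roots: w x - x lies in the coroot
  lattice, and no nonzero element of that lattice is annihilated by all roots.
*)

lemma pair_commute: "pair x y = pair y x"
  unfolding pair_def by (simp add: mult.commute)

lemma pair_diff_left: "pair (x - y) a = pair x a - pair y a"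
  unfolding pair_def by (simp add: algebra_simps sum_subtractf)

lemma pair_diff_right: "pair a (x - y) = pair a x - pair a y"
  unfolding pair_def by (simp add: algebra_simps sum_subtractf)

lemma pair_smult_left: "pair (k *s x) a = k * pair x a"
  unfolding pair_def by (simp add: algebra_simps sum_distrib_left)

lemma pair_smult_right: "pair a (k *s x) = k * pair a x"
  unfolding pair_def by (simp add: algebra_simps sum_distrib_left)

lemma pair_sum_left: "pair (sum f A) a = (\<Sum>x\<in>A. pair (f x) a)"
  unfolding pair_def by (simp add: sum_distrib_right sum.swap[of _ UNIV])

lemma pair_sum_right: "pair a (sum f A) = (\<Sum>x\<in>A. pair a (f x))"
  unfolding pair_def by (simp add: sum_distrib_left sum.swap[of _ UNIV])

lemma refl_L_eq: "refl_L a c l = l - pair a l *s c"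
  unfolding refl_L_def by (simp add: vec_eq_iff)

lemma refl_X_eq: "refl_X a c x = x - pair x c *s a"
  unfolding refl_X_def by (simp add: vec_eq_iff)

lemma refl_X_eq_refl_L: "refl_X a c = refl_L c a"
  by (simp add: fun_eq_iff refl_X_eq refl_L_eq pair_commute)

lemma pair_refl_L: "pair a (refl_L b c x) = pair (refl_X b c a) x"
  unfolding refl_L_eq refl_X_eq pair_diff_right pair_diff_left pair_smult_left pair_smult_right
  by (simp add: pair_commute)

lemma refl_L_involutive: "pair a c = 2 \<Longrightarrow> refl_L a c (refl_L a c l) = l"
  unfolding refl_L_eq by (simp add: pair_diff_right pair_smult_right vec_eq_iff algebra_simps)

lemma reflection_invariant_sum:
  assumes "pair a c = 2" and "refl_L a c ` S = S"
  shows "2 *s (\<Sum>s\<in>S. pair a s *s s) = (\<Sum>s\<in>S. (pair a s)\<^sup>2) *s c"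
proof -
  let ?r = "refl_L a c"
  have "inj_on ?r S" by (metis refl_L_involutive[OF assms(1)] inj_onI)
  then have "(\<Sum>s\<in>S. pair a s *s s) = (\<Sum>s\<in>S. pair a (?r s) *s ?r s)"
    using sum.reindex[of ?r S "\<lambda>s. pair a s *s s"] assms(2) by simp
  also have "\<dots> = (\<Sum>s\<in>S. (pair a s)\<^sup>2 *s c - pair a s *s s)"
    using assms(1) by (simp add: refl_L_eq pair_diff_right pair_smult_right vec_eq_iff
        algebra_simps power2_eq_square)
  also have "\<dots> = (\<Sum>s\<in>S. (pair a s)\<^sup>2) *s c - (\<Sum>s\<in>S. pair a s *s s)"
    by (simp add: vec_eq_iff sum_subtractf sum_distrib_right)
  finally show ?thesis by (simp add: vec_eq_iff)
qed

lemma weyl_comp: "u \<in> weyl R cor \<Longrightarrow> v \<in> weyl R cor \<Longrightarrow> u \<circ> v \<in> weyl R cor"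
proof (induction u rule: weyl.induct)
  case weyl_id
  then show ?case by simp
next
  case (weyl_step w a)
  then have "refl_L a (cor a) \<circ> (w \<circ> v) \<in> weyl R cor" by (intro weyl.weyl_step)
  then show ?case by (simp add: comp_def)
qed

lemma weyl_inv:
  assumes "root_datum R cor" and "w \<in> weyl R cor"
  shows "inv w \<in> weyl R cor" and "inv w \<circ> w = id" and "w \<circ> inv w = id"
proof -
  have "\<exists>w'\<in>weyl R cor. w' \<circ> w = id \<and> w \<circ> w' = id"
    using assms(2)
  proof (induction w rule: weyl.induct)
    case weyl_id
    then show ?case by (intro bexI[of _ id] conjI weyl.weyl_id) simp_all
  next
    case (weyl_step w a)
    then obtain w' where w': "w' \<in> weyl R cor" "w' \<circ> w = id" "w \<circ> w' = id" by blast
    let ?s = "refl_L a (cor a)"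
    have ss: "?s (?s l) = l" for l
      using assms(1) weyl_step(2) by (simp add: root_datum_def refl_L_involutive)
    have "w' \<circ> ?s \<in> weyl R cor"
      using weyl_comp[OF w'(1) weyl.weyl_step[OF weyl.weyl_id weyl_step(2)]] by simp
    moreover have "(w' \<circ> ?s) \<circ> (?s \<circ> w) = id" "(?s \<circ> w) \<circ> (w' \<circ> ?s) = id"
      using w'(2,3) ss by (simp_all add: fun_eq_iff)
    ultimately show ?case by blast
  qed
  then obtain w' where w': "w' \<in> weyl R cor" "w' \<circ> w = id" "w \<circ> w' = id" by blast
  then have "inv w = w'" by (intro inv_unique_comp)
  with w' show "inv w \<in> weyl R cor" "inv w \<circ> w = id" "w \<circ> inv w = id" by simp_all
qed

lemma weyl_inv_image:
  assumes "root_datum R cor"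
  shows "inv ` weyl R cor = weyl R cor"
proof
  show "inv ` weyl R cor \<subseteq> weyl R cor" using weyl_inv(1)[OF assms] by blast
  show "weyl R cor \<subseteq> inv ` weyl R cor"
  proof
    fix w assume w: "w \<in> weyl R cor"
    have "bij w" using weyl_inv(2,3)[OF assms w] by (rule o_bij)
    then have "w = inv (inv w)" by (simp add: inv_inv_eq)
    then show "w \<in> inv ` weyl R cor" using weyl_inv(1)[OF assms w] by blast
  qed
qed

section \<open>Finiteness of the Weyl group\<close>

definition coroot_lattice :: "(int^'n) set \<Rightarrow> (int^'n \<Rightarrow> int^'n) \<Rightarrow> (int^'n) set" where
  "coroot_lattice R cor = range (\<lambda>k. \<Sum>a\<in>R. k a *s cor a)"

lemma coroot_lattice_0: "0 \<in> coroot_lattice R cor"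
  unfolding coroot_lattice_def by (rule range_eqI[of _ _ "\<lambda>_. 0"]) (simp add: vec_eq_iff)

lemma coroot_lattice_diff:
  assumes "x \<in> coroot_lattice R cor" and "y \<in> coroot_lattice R cor"
  shows "x - y \<in> coroot_lattice R cor"
proof -
  obtain k k' where "x = (\<Sum>a\<in>R. k a *s cor a)" "y = (\<Sum>a\<in>R. k' a *s cor a)"
    using assms unfolding coroot_lattice_def by blast
  then have "x - y = (\<Sum>a\<in>R. (k a - k' a) *s cor a)"
    by (simp add: vec_eq_iff sum_subtractf algebra_simps)
  then show ?thesis unfolding coroot_lattice_def by (intro range_eqI[of _ _ "\<lambda>a. k a - k' a"])
qed

lemma coroot_lattice_smult_coroot:
  assumes "finite R" and "a \<in> R"
  shows "t *s cor a \<in> coroot_lattice R cor"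
proof -
  have "(\<Sum>b\<in>R. (if b = a then t else 0) *s cor b) = (\<Sum>b\<in>R. if b = a then t *s cor a else 0)"
    by (rule sum.cong) simp_all
  also have "\<dots> = t *s cor a"
    using assms by simp
  finally have "(\<Sum>b\<in>R. (if b = a then t else 0) *s cor b) = t *s cor a" .
  then show ?thesis
    unfolding coroot_lattice_def by (rule range_eqI[of _ _ "\<lambda>b. if b = a then t else 0", OF sym])
qed

lemma weyl_diff_in_coroot_lattice:
  assumes "finite R" and "w \<in> weyl R cor"
  shows "w x - x \<in> coroot_lattice R cor"
  using assms(2)
proof (induction w rule: weyl.induct)
  case weyl_id
  then show ?case by (simp add: coroot_lattice_0)
next
  case (weyl_step w a)
  have "(refl_L a (cor a) \<circ> w) x - x = (w x - x) - pair a (w x) *s cor a"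
    by (simp add: refl_L_eq)
  also have "\<dots> \<in> coroot_lattice R cor"
    using weyl_step assms(1) by (intro coroot_lattice_diff[OF weyl_step.IH] coroot_lattice_smult_coroot)
  finally show ?case .
qed

lemma weyl_dual_root:
  assumes "root_datum R cor" and "w \<in> weyl R cor" and "a \<in> R"
  shows "\<exists>a'\<in>R. \<forall>x. pair a (w x) = pair a' x"
  using assms(2,3)
proof (induction w arbitrary: a rule: weyl.induct)
  case weyl_id
  then show ?case by auto
next
  case (weyl_step w b)
  have "refl_X b (cor b) a \<in> R"
    using assms(1) weyl_step(2,4) unfolding root_datum_def by blast
  then obtain a' where "a' \<in> R" "\<forall>x. pair (refl_X b (cor b) a) (w x) = pair a' x"
    using weyl_step.IH by blast
  then show ?case by (auto simp: pair_refl_L)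
qed

definition coroot_map :: "(int^'n) set \<Rightarrow> (int^'n \<Rightarrow> int^'n) \<Rightarrow> int^'n \<Rightarrow> int^'n" where
  "coroot_map R cor x = (\<Sum>c\<in>cor ` R. pair x c *s c)"

lemma coroot_map_lincomb:
  "coroot_map R cor (\<Sum>a\<in>A. k a *s x a) = (\<Sum>a\<in>A. k a *s coroot_map R cor (x a))"
  unfolding coroot_map_def pair_sum_left pair_smult_left
  by (simp add: vec_eq_iff sum_distrib_left sum_distrib_right mult.assoc sum.swap[of _ A])

lemma pair_coroot_map: "pair x (coroot_map R cor x) = (\<Sum>c\<in>cor ` R. (pair x c)\<^sup>2)"
  unfolding coroot_map_def pair_sum_right pair_smult_right by (simp add: power2_eq_square)

lemma coroot_map_eq_0:
  assumes "finite R" and "pair x (coroot_map R cor x) = 0"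
  shows "coroot_map R cor x = 0"
proof -
  have "\<forall>c\<in>cor ` R. (pair x c)\<^sup>2 = 0"
    using assms by (subst sum_nonneg_eq_0_iff[symmetric]) (simp_all add: pair_coroot_map)
  then show ?thesis unfolding coroot_map_def by (intro sum.neutral) simp
qed

lemma coroot_smult_eq_coroot_map:
  assumes "root_datum R cor" and "a \<in> R"
  shows "(\<Sum>c\<in>cor ` R. (pair a c)\<^sup>2) *s cor a = 2 *s coroot_map R cor a"
  using reflection_invariant_sum[of a "cor a" "cor ` R"] assms
  unfolding root_datum_def coroot_map_def by simp

lemma coroot_lattice_multiple_in_coroot_map_range:
  assumes "root_datum R cor" and "y \<in> coroot_lattice R cor"
  obtains M :: int and k where "M > 0" and "M *s y = 2 *s coroot_map R cor (\<Sum>a\<in>R. k a *s a)"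
proof -
  obtain k where y: "y = (\<Sum>a\<in>R. k a *s cor a)"
    using assms(2) unfolding coroot_lattice_def by blast
  have fin: "finite R" using assms(1) unfolding root_datum_def by blast
  define E where "E a = (\<Sum>c\<in>cor ` R. (pair a c)\<^sup>2)" for a
  have E_pos: "E a > 0" if "a \<in> R" for a
  proof -
    have "(pair a (cor a))\<^sup>2 \<le> E a"
      unfolding E_def using fin that by (intro member_le_sum) simp_all
    moreover have "pair a (cor a) = 2" using assms(1) that unfolding root_datum_def by blast
    ultimately show ?thesis by simp
  qed
  define P where "P a = (\<Prod>b\<in>R - {a}. E b)" for a
  have M_split: "(\<Prod>b\<in>R. E b) = P a * E a" if "a \<in> R" for a
    unfolding P_def using fin that by (simp add: prod.remove mult.commute)
  have "(\<Prod>b\<in>R. E b) *s y = (\<Sum>a\<in>R. (k a * P a) *s (E a *s cor a))"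
    unfolding y by (simp add: vec_eq_iff sum_distrib_left M_split mult_ac cong: sum.cong)
  also have "\<dots> = (\<Sum>a\<in>R. (k a * P a) *s (2 *s coroot_map R cor a))"
    using coroot_smult_eq_coroot_map[OF assms(1)] unfolding E_def by (simp cong: sum.cong)
  also have "\<dots> = 2 *s coroot_map R cor (\<Sum>a\<in>R. (k a * P a) *s a)"
    by (simp add: coroot_map_lincomb vec_eq_iff sum_distrib_left mult_ac)
  finally show ?thesis
    using E_pos by (intro that[of "\<Prod>b\<in>R. E b"] prod_pos) auto
qed

lemma coroot_lattice_annihilated_by_roots_eq_0:
  assumes "root_datum R cor" and "y \<in> coroot_lattice R cor" and "\<forall>b\<in>R. pair b y = 0"
  shows "y = 0"
proof -
  obtain M :: int and k where "M > 0" and My: "M *s y = 2 *s coroot_map R cor (\<Sum>a\<in>R. k a *s a)"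
    using coroot_lattice_multiple_in_coroot_map_range[OF assms(1,2)] by blast
  define \<eta> where "\<eta> = (\<Sum>a\<in>R. k a *s a)"
  have "pair \<eta> y = 0"
    using assms(3) unfolding \<eta>_def pair_sum_left pair_smult_left by simp
  then have "2 * pair \<eta> (coroot_map R cor \<eta>) = 0"
    using arg_cong[OF My, of "pair \<eta>"] unfolding \<eta>_def pair_smult_right by simp
  then have "coroot_map R cor \<eta> = 0"
    using assms(1) unfolding root_datum_def by (intro coroot_map_eq_0) simp_all
  then show ?thesis using My \<open>M > 0\<close> unfolding \<eta>_def by simp
qed

lemma weyl_finite:
  fixes R :: "(int^'n) set"
  assumes "root_datum R cor"
  shows "finite (weyl R cor)"
proof -
  have fin: "finite R" using assms unfolding root_datum_def by blast
  define F where "F w = restrict (\<lambda>a x. pair a (w x)) R" for w :: "int^'n \<Rightarrow> int^'n"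
  have "F ` weyl R cor \<subseteq> R \<rightarrow>\<^sub>E (\<lambda>a x. pair a x) ` R"
    using weyl_dual_root[OF assms] by (fastforce simp: F_def)
  then have "finite (F ` weyl R cor)"
    by (rule finite_subset) (intro finite_PiE fin finite_imageI)
  moreover have "inj_on F (weyl R cor)"
  proof (rule inj_onI, rule ext)
    fix u w x
    assume u: "u \<in> weyl R cor" and w: "w \<in> weyl R cor" and "F u = F w"
    then have "\<forall>a\<in>R. pair a (u x - w x) = 0"
      by (auto simp: F_def pair_diff_right restrict_def fun_eq_iff split: if_splits)
    moreover have "u x - w x \<in> coroot_lattice R cor"
      using coroot_lattice_diff[OF weyl_diff_in_coroot_lattice[OF fin u, of x]
          weyl_diff_in_coroot_lattice[OF fin w, of x]]
      by simp
    ultimately show "u x = w x"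
      using coroot_lattice_annihilated_by_roots_eq_0[OF assms] by fastforce
  qed
  ultimately show ?thesis by (rule finite_imageD)
qed

section \<open>Antidominant conjugates\<close>

definition root_form :: "(int^'n) set \<Rightarrow> int^'n \<Rightarrow> int^'n \<Rightarrow> int" where
  "root_form R x y = (\<Sum>b\<in>R. pair b x * pair b y)"

lemma root_form_diff_right: "root_form R x (y - z) = root_form R x y - root_form R x z"
  unfolding root_form_def by (simp add: pair_diff_right sum_subtractf algebra_simps)

lemma root_form_smult_right: "root_form R x (t *s y) = t * root_form R x y"
  unfolding root_form_def by (simp add: pair_smult_right sum_distrib_left mult_ac)

lemma root_form_coroot:
  assumes "root_datum R cor" and "a \<in> R"
  shows "2 * root_form R x (cor a) = root_form R (cor a) (cor a) * pair a x"
proof -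
  have "2 *s (\<Sum>b\<in>R. pair (cor a) b *s b) = (\<Sum>b\<in>R. (pair (cor a) b)\<^sup>2) *s a"
    using reflection_invariant_sum[of "cor a" a R] assms
    by (simp add: root_datum_def refl_X_eq_refl_L pair_commute)
  from arg_cong[OF this, of "pair x"] show ?thesis
    unfolding root_form_def pair_smult_right pair_sum_right
    by (simp add: pair_commute power2_eq_square mult_ac)
qed

lemma root_form_coroot_pos:
  assumes "root_datum R cor" and "a \<in> R" and "pair a rho > 0"
  shows "root_form R rho (cor a) > 0"
proof -
  have "pair a (cor a) = 2" and "finite R" using assms(1,2) unfolding root_datum_def by blast+
  then have "4 \<le> root_form R (cor a) (cor a)"
    unfolding root_form_def using member_le_sum[OF assms(2), of "\<lambda>b. pair b (cor a) * pair b (cor a)"]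
    by simp
  then have "0 < root_form R (cor a) (cor a) * pair a rho" using assms(3) by simp
  then show ?thesis using root_form_coroot[OF assms(1,2), of rho] by simp
qed

text \<open>A conjugate minimising \<open>root_form R rho\<close> is antidominant: reflecting in a
  positive root that pairs positively with it would lower the form.\<close>
lemma antidom_exists:
  assumes "root_datum R cor"
  shows "\<exists>w\<in>weyl R cor. w l \<in> antidom R rho"
proof -
  let ?f = "\<lambda>w. root_form R rho (w l)"
  obtain w0 where w0: "w0 \<in> weyl R cor" and min: "\<And>w. w \<in> weyl R cor \<Longrightarrow> ?f w0 \<le> ?f w"
    using ex_min_if_finite[of "?f ` weyl R cor"] weyl_finite[OF assms] weyl.weyl_id[of R cor]
    by (auto simp: not_less)
  have "pair a (w0 l) \<le> 0" if a: "a \<in> R" and pos: "pair a rho > 0" for a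
  proof (rule ccontr)
    assume "\<not> pair a (w0 l) \<le> 0"
    then have "?f (refl_L a (cor a) \<circ> w0) < ?f w0"
      using root_form_coroot_pos[OF assms a pos]
      by (simp add: refl_L_eq root_form_diff_right root_form_smult_right)
    with min[OF weyl.weyl_step[OF w0 a]] show False by simp
  qed
  with w0 show ?thesis unfolding antidom_def by blast
qed

section \<open>Valuations of cocycles\<close>

lemma additive_int_smult:
  fixes f :: "int^'n \<Rightarrow> 'b::ring_1"
  assumes "Modules.additive f"
  shows "f (k *s x) = of_int k * f x"
proof (induction k rule: int_induct[where k = 0])
  case base
  show ?case using additive.zero[OF assms] by simp
next
  case (step1 i)
  have "(i + 1) *s x = i *s x + x" by (simp add: vector_sadd_rdistrib)
  with step1.IH show ?case by (simp add: additive.add[OF assms] algebra_simps)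
next
  case (step2 i)
  have "(i - 1) *s x = i *s x - x" by (simp add: vector_sub_rdistrib)
  with step2.IH show ?case by (simp add: additive.diff[OF assms] algebra_simps)
qed

lemma additive_eq_sum_axis:
  fixes f :: "int^'n \<Rightarrow> 'b::ring_1"
  assumes "Modules.additive f"
  shows "f l = (\<Sum>i\<in>UNIV. of_int (l$i) * f (axis i 1))"
proof -
  have "f l = f (\<Sum>i\<in>UNIV. l$i *s axis i 1)" by (simp add: basis_expansion)
  also have "\<dots> = (\<Sum>i\<in>UNIV. of_int (l$i) * f (axis i 1))"
    by (simp add: additive.sum[OF assms] additive_int_smult[OF assms])
  finally show ?thesis .
qed

lemma valuation_mult: "valuation v \<Longrightarrow> x \<noteq> 0 \<Longrightarrow> y \<noteq> 0 \<Longrightarrow> v (x * y) = v x + v y"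
  unfolding valuation_def by blast

lemma valuation_one: "valuation v \<Longrightarrow> v 1 = 0"
  using valuation_mult[of v 1 1] by simp

lemma ev_valvec_hom:
  assumes "valuation v" and "\<And>l. h l \<noteq> 0" and "\<And>l m. h (l + m) = h l * h m"
  shows "ev l (valvec v h) = v (h l)"
proof -
  have "Modules.additive (\<lambda>l. v (h l))"
    by unfold_locales (simp add: assms valuation_mult)
  then have "v (h l) = (\<Sum>i\<in>UNIV. of_int (l$i) * v (h (axis i 1)))"
    by (rule additive_eq_sum_axis)
  then show ?thesis unfolding ev_def valvec_def by simp
qed

lemma absv_le_1_iff: "q > 1 \<Longrightarrow> x \<noteq> 0 \<Longrightarrow> absv q v x \<le> 1 \<longleftrightarrow> 0 \<le> v x"
  using powr_le_cancel_iff[of q "- v x" 0] by (simp add: absv_def)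

lemma cocycle_nonzero: "cocycle W Lm q v g \<Longrightarrow> w \<in> W \<Longrightarrow> g w l \<noteq> 0"
  by (simp add: cocycle_def)

lemma cocycle_add: "cocycle W Lm q v g \<Longrightarrow> w \<in> W \<Longrightarrow> g w (l + m) = g w l * g w m"
  by (simp add: cocycle_def)

lemma cocycle_comp:
  "cocycle W Lm q v g \<Longrightarrow> u \<in> W \<Longrightarrow> w \<in> W \<Longrightarrow> g (u \<circ> w) l = g u (w l) * g w l"
  by (simp add: cocycle_def)

lemma cocycle_absv_le_1: "cocycle W Lm q v g \<Longrightarrow> w \<in> W \<Longrightarrow> l \<in> Lm \<Longrightarrow> absv q v (g w l) \<le> 1"
  by (simp add: cocycle_def)

lemma cocycle_fixed: "cocycle W Lm q v g \<Longrightarrow> w \<in> W \<Longrightarrow> w l = l \<Longrightarrow> g w l = 1"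
  by (simp add: cocycle_def)

context
  fixes R :: "(int^'n) set" and cor and rho and q and v :: "'k::field \<Rightarrow> real" and g
  assumes rd: "root_datum R cor" and val: "valuation v" and q: "q > 1"
    and coc: "cocycle (weyl R cor) (antidom R rho) q v g"
begin

lemma cocycle_val_nonpos:
  assumes "w \<in> weyl R cor" and "w l \<in> antidom R rho"
  shows "v (g w l) \<le> 0"
proof -
  have inv: "inv w \<in> weyl R cor" "inv w \<circ> w = id" using weyl_inv[OF rd assms(1)] by simp_all
  have "g (inv w) (w l) * g w l = g (inv w \<circ> w) l"
    using cocycle_comp[OF coc inv(1) assms(1)] by simp
  also have "\<dots> = 1"
    using cocycle_fixed[OF coc weyl.weyl_id] inv(2) by simp
  finally have prod: "g (inv w) (w l) * g w l = 1" .
  have "v (g (inv w) (w l)) + v (g w l) = v (g (inv w) (w l) * g w l)"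
    using valuation_mult[OF val] cocycle_nonzero[OF coc] inv(1) assms(1) by simp
  also have "\<dots> = 0"
    using prod valuation_one[OF val] by simp
  finally have "v (g (inv w) (w l)) + v (g w l) = 0" .
  moreover have "0 \<le> v (g (inv w) (w l))"
    using cocycle_absv_le_1[OF coc inv(1) assms(2)] cocycle_nonzero[OF coc inv(1)]
    by (simp add: absv_le_1_iff[OF q])
  ultimately show ?thesis by simp
qed

lemma cocycle_val_antidom_le:
  assumes "u \<in> weyl R cor" and "u l \<in> antidom R rho" and "w \<in> weyl R cor"
  shows "v (g u l) \<le> v (g w l)"
proof -
  let ?u' = "u \<circ> inv w"
  have inv: "inv w \<in> weyl R cor" "inv w \<circ> w = id" using weyl_inv[OF rd assms(3)] by simp_all
  have u': "?u' \<in> weyl R cor" using weyl_comp[OF assms(1) inv(1)] .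
  have u'_w: "?u' (w l) = u l" using inv(2) by (simp add: pointfree_idE)
  have "g u l = g (?u' \<circ> w) l" using inv(2) by (simp add: comp_assoc)
  also have "\<dots> = g ?u' (w l) * g w l" using cocycle_comp[OF coc u' assms(3)] .
  finally have "v (g u l) = v (g ?u' (w l)) + v (g w l)"
    using valuation_mult[OF val] cocycle_nonzero[OF coc] u' assms(3) by simp
  moreover have "v (g ?u' (w l)) \<le> 0"
    using cocycle_val_nonpos[OF u'] assms(2) u'_w by simp
  ultimately show ?thesis by simp
qed

lemma gamma_dom_val_min:
  "\<exists>u\<in>weyl R cor. gamma_dom (weyl R cor) (antidom R rho) g l = g u l
     \<and> (\<forall>w\<in>weyl R cor. v (g u l) \<le> v (g w l))"
proof -
  let ?u = "SOME u. u \<in> weyl R cor \<and> u l \<in> antidom R rho"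
  have "\<exists>u. u \<in> weyl R cor \<and> u l \<in> antidom R rho"
    using antidom_exists[OF rd, of l rho] by blast
  then have u: "?u \<in> weyl R cor \<and> ?u l \<in> antidom R rho"
    by (rule someI_ex)
  then have "\<forall>w\<in>weyl R cor. v (g ?u l) \<le> v (g w l)"
    using cocycle_val_antidom_le by blast
  with u show ?thesis unfolding gamma_dom_def by blast
qed

lemma V_gamma_eq_lattice_support:
  "V_gamma (weyl R cor) (antidom R rho) v g
     = {z. \<forall>l. \<exists>p\<in>(\<lambda>w. valvec v (g w)) ` weyl R cor. ev l p \<le> ev l z}"
proof -
  have ev_p: "ev l (valvec v (g w)) = v (g w l)" if "w \<in> weyl R cor" for w l
    using that by (intro ev_valvec_hom val cocycle_nonzero[OF coc] cocycle_add[OF coc])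
  have "v (gamma_dom (weyl R cor) (antidom R rho) g l) \<le> t
      \<longleftrightarrow> (\<exists>w\<in>weyl R cor. v (g w l) \<le> t)" for l t
  proof -
    obtain u where u: "u \<in> weyl R cor" "gamma_dom (weyl R cor) (antidom R rho) g l = g u l"
      and min: "\<forall>w\<in>weyl R cor. v (g u l) \<le> v (g w l)"
      using gamma_dom_val_min by blast
    show ?thesis using u min by (auto intro: order_trans)
  qed
  then show ?thesis unfolding V_gamma_def by (simp add: ev_p cong: bex_cong)
qed

end

lemma neg_z_pt_image:
  assumes "root_datum R cor"
  shows "{- z_pt v g w | w. w \<in> weyl R cor} = (\<lambda>w. valvec v (g w)) ` weyl R cor"
proof -
  have "(\<lambda>w. valvec v (g w)) ` weyl R cor = (\<lambda>w. valvec v (g w)) ` inv ` weyl R cor"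
    by (simp only: weyl_inv_image[OF assms])
  then show ?thesis by (simp add: z_pt_def Setcompr_eq_image image_image)
qed

section \<open>Convex hulls cut out by integral linear forms\<close>

lemma ev_eq_inner: "ev l z = inner (\<chi> i. real_of_int (l$i)) z"
  unfolding ev_def inner_vec_def by simp

lemma ev_diff: "ev l (x - y) = ev l x - ev l y"
  by (simp add: ev_eq_inner inner_diff_right)

lemma ev_floor_scaled_ge:
  "t * inner f d - (\<Sum>i\<in>UNIV. \<bar>d$i\<bar>) \<le> ev (\<chi> i. \<lfloor>t * f$i\<rfloor>) d"
proof -
  have "t * f$i * d$i - \<bar>d$i\<bar> \<le> real_of_int \<lfloor>t * f$i\<rfloor> * d$i" for i
  proof -
    have "\<bar>real_of_int \<lfloor>t * f$i\<rfloor> - t * f$i\<bar> \<le> 1" by linarith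
    then have "\<bar>(real_of_int \<lfloor>t * f$i\<rfloor> - t * f$i) * d$i\<bar> \<le> \<bar>d$i\<bar>"
      by (simp add: abs_mult mult_left_le_one_le)
    then show ?thesis by (simp add: algebra_simps abs_le_iff)
  qed
  then have "(\<Sum>i\<in>UNIV. t * f$i * d$i - \<bar>d$i\<bar>) \<le> ev (\<chi> i. \<lfloor>t * f$i\<rfloor>) d"
    unfolding ev_def by (intro sum_mono) simp
  then show ?thesis
    by (simp add: inner_vec_def sum_subtractf sum_distrib_left mult.assoc)
qed

text \<open>Rounding a scaled separating functional to an integral one costs at most
  \<open>\<Sum>i. \<bar>d$i\<bar>\<close> (see \<open>ev_floor_scaled_ge\<close>), which the scaling outgrows.\<close>
lemma convex_hull_eq_lattice_support:
  fixes S :: "(real^'n) set"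
  assumes "finite S"
  shows "convex hull S = {z. \<forall>l. \<exists>p\<in>S. ev l p \<le> ev l z}"
proof (intro antisym subsetI CollectI allI)
  fix z l
  assume z: "z \<in> convex hull S"
  then have "S \<noteq> {}" by auto
  then obtain p where p: "p \<in> S" and min: "\<And>p'. p' \<in> S \<Longrightarrow> ev l p \<le> ev l p'"
    using ex_min_if_finite[of "ev l ` S"] assms by (auto simp: not_less)
  have "convex hull S \<subseteq> {z. ev l p \<le> ev l z}"
    using min by (intro hull_minimal) (auto simp: ev_eq_inner convex_halfspace_ge)
  with z p show "\<exists>p\<in>S. ev l p \<le> ev l z" by blast
next
  fix z
  assume z: "z \<in> {z. \<forall>l. \<exists>p\<in>S. ev l p \<le> ev l z}"
  show "z \<in> convex hull S"
  proof (rule ccontr)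
    assume "z \<notin> convex hull S"
    moreover have "closed (convex hull S)"
      using assms by (intro compact_imp_closed finite_imp_compact_convex_hull)
    ultimately obtain f b where fz: "inner f z < b" and fS: "\<forall>x\<in>convex hull S. b < inner f x"
      using separating_hyperplane_closed_point[OF convex_convex_hull] by blast
    define K where "K = (\<Sum>p\<in>S. \<Sum>i\<in>UNIV. \<bar>(p - z)$i\<bar>)"
    obtain N :: nat where N: "K < real N * (b - inner f z)"
      using ex_less_of_nat_mult fz by (metis diff_gt_0_iff_gt)
    obtain p where p: "p \<in> S" and "ev (\<chi> i. \<lfloor>real N * f$i\<rfloor>) p \<le> ev (\<chi> i. \<lfloor>real N * f$i\<rfloor>) z"
      using z by blast
    then have "real N * inner f (p - z) - (\<Sum>i\<in>UNIV. \<bar>(p - z)$i\<bar>) \<le> 0"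
      using ev_floor_scaled_ge[of "real N" f "p - z"] by (simp add: ev_diff)
    moreover have "(\<Sum>i\<in>UNIV. \<bar>(p - z)$i\<bar>) \<le> K"
      unfolding K_def using assms p by (intro member_le_sum) auto
    moreover have "b < inner f p"
      using fS hull_subset[of S convex] p by blast
    then have "real N * (b - inner f z) \<le> real N * inner f (p - z)"
      by (intro mult_left_mono) (auto simp: inner_diff_right)
    ultimately show False using N by linarith
  qed
qed

theorem lemma2p3:
  fixes R :: "(int^'n) set" and cor :: "int^'n \<Rightarrow> int^'n" and rho :: "int^'n"
    and q :: real and valL :: "'k::field \<Rightarrow> real"
    and g :: "(int^'n \<Rightarrow> int^'n) \<Rightarrow> int^'n \<Rightarrow> 'k"
  assumes "root_datum R cor"
    and "\<forall>a\<in>R. pair a rho \<noteq> 0"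
    and "valuation valL" and "q > 1"
    and "cocycle (weyl R cor) (antidom R rho) q valL g"
  shows "V_gamma (weyl R cor) (antidom R rho) valL g
         = convex hull {- z_pt valL g w | w. w \<in> weyl R cor}"
proof -
  have "V_gamma (weyl R cor) (antidom R rho) valL g
      = {z. \<forall>l. \<exists>p\<in>(\<lambda>w. valvec valL (g w)) ` weyl R cor. ev l p \<le> ev l z}"
    using assms(1,3-5) by (rule V_gamma_eq_lattice_support)
  also have "\<dots> = convex hull ((\<lambda>w. valvec valL (g w)) ` weyl R cor)"
    using weyl_finite[OF assms(1)] by (simp add: convex_hull_eq_lattice_support)
  also have "\<dots> = convex hull {- z_pt valL g w | w. w \<in> weyl R cor}"
    by (simp add: neg_z_pt_image[OF assms(1)])
  finally show ?thesis .
qed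

end
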